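(* Let $S_j$ be local potentials satisfying (A)–(E) and let $K\subset\mathbb{R}^d$ be compact. Then there exists $M>0$, depending on the $S_j$ and on $K$, such that for every $1$-periodic $C^2$ function $V:\mathbb{R}\to\mathbb{R}$ with $\operatorname{osc}V:=\max_{\xi,\nu\in\mathbb{R}}(V(\xi)-V(\nu))>M$, the local potentials $\tilde S_j(x)=S_j(x)+V(x_j)$ do not possess any connected, strictly ordered, shift-invariant family of global minimizers with rotation vector in $K$.
   Context: Notation: $\|i\|=\sum_{k=1}^d|i_k|$, $B_j^r=\{k:\|k-j\|\le r\}$, $(\tau_{k,l}x)_i=x_{i+k}+l$. Local potentials $S_j:\mathbb{R}^{\mathbb{Z}^d}\to\mathbb{R}$, $j\in\mathbb{Z}^d$, satisfy: (A) there is $r\in(0,\infty)$ and $C^2$ functions $s_j:\mathbb{R}^{B_j^r}\to\mathbb{R}$ with $S_j(x)=s_j(x|_{B_j^r})$; (B) $S_j(\tau_{k,l}x)=S_{j+k}(x)$; (C) each $S_j$ is bounded below and $S_j(x)\to\infty$ as $|x_k-x_j|\to\infty$ whenever $\|k-j\|=1$; (D) $\partial_{i,k}S_j\le0$ for $i\ne k$, and $\partial_{i,k}S_i<0$ when $\|i-k\|=1$; (E) $|\partial_{i,k}S_j|\le C$ uniformly. A family $\mathcal{F}\subset\mathbb{R}^{\mathbb{Z}^d}$ is strictly ordered if for all $x,y\in\mathcal{F}$ one has $x\ll y$, $x=y$ or $y\ll x$ (where $x\ll y$ means $x_i<y_i$ for all $i$), shift-invariant if $\tau_{k,l}\mathcal{F}\subset\mathcal{F}$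 for all $(k,l)$, and connected refers to the topology of pointwise convergence; elements of such a family are Birkhoff with a common rotation vector $\omega$ ($\lim_n x_{ni}/n=\langle\omega,i\rangle$). Global minimizer (for potentials $\tilde S_j$): $\tilde W_B(x+y)\ge\tilde W_B(x)$ for every finite $B$ and every $y$ supported in $\mathring{B}^{(r)}=\{i\in B:B_i^r\subset B\}$, where $\tilde W_B=\sum_{j\in B}\tilde S_j$. *)

theory Defs
  imports "HOL-Analysis.Analysis"
begin

text \<open>Lattice sites are elements of int^'d (the type 'd is finite, d = CARD('d)).
Configurations are functions (int^'d) => real; the type of configurations carries
the product topology (topology of pointwise convergence) from Function_Topology.\<close>

type_synonym 'd site = "int ^ 'd"
type_synonym 'd config = "'d site \<Rightarrow> real"

definition lnorm :: "'d::finite site \<Rightarrow> int" where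
  "lnorm i = (\<Sum>k\<in>UNIV. \<bar>i $ k\<bar>)"

definition ball1 :: "'d::finite site \<Rightarrow> real \<Rightarrow> 'd site set" where
  "ball1 j r = {k. real_of_int (lnorm (k - j)) \<le> r}"

definition shift :: "'d::finite site \<Rightarrow> int \<Rightarrow> 'd config \<Rightarrow> 'd config" where
  "shift k l x = (\<lambda>i. x (i + k) + real_of_int l)"

definition depends_only_on :: "('d config \<Rightarrow> real) \<Rightarrow> 'd site set \<Rightarrow> bool" where
  "depends_only_on f B \<longleftrightarrow> (\<forall>x y. (\<forall>i\<in>B. x i = y i) \<longrightarrow> f x = f y)"

definition has_partial ::
  "('d config \<Rightarrow> real) \<Rightarrow> 'd site \<Rightarrow> 'd config \<Rightarrow> real \<Rightarrow> bool" where
  "has_partial f i x D \<longleftrightarrow> ((\<lambda>t. f (x(i := t))) has_real_derivative D) (at (x i))"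

definition partial :: "'d site \<Rightarrow> ('d config \<Rightarrow> real) \<Rightarrow> 'd config \<Rightarrow> real" where
  "partial i f x = (THE D. has_partial f i x D)"

definition partial2 :: "'d site \<Rightarrow> 'd site \<Rightarrow> ('d config \<Rightarrow> real) \<Rightarrow> 'd config \<Rightarrow> real" where
  "partial2 i k f = partial i (partial k f)"

text \<open>A function depending only on the finitely many coordinates in B is C^2 (as a
function on R^B): all first and second partial derivatives exist everywhere and the
second partial derivatives are continuous (continuous second partials imply C^2 in
finitely many variables).\<close>
definition C2_local :: "('d config \<Rightarrow> real) \<Rightarrow> bool" where
  "C2_local f \<longleftrightarrow>
     (\<forall>i x. \<exists>D. has_partial f i x D) \<and>
     (\<forall>i k x. \<exists>D. has_partial (partial k f) i x D) \<and>
     (\<forall>i k. continuous_on UNIV (partial2 i k f))"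

definition C2_real :: "(real \<Rightarrow> real) \<Rightarrow> bool" where
  "C2_real V \<longleftrightarrow> (\<exists>V' V''. (\<forall>t. (V has_real_derivative V' t) (at t)) \<and>
                            (\<forall>t. (V' has_real_derivative V'' t) (at t)) \<and>
                            continuous_on UNIV V'')"

definition osc :: "(real \<Rightarrow> real) \<Rightarrow> real" where
  "osc V = Sup {V \<xi> - V \<nu> | \<xi> \<nu>. True}"

definition local_potentials :: "real \<Rightarrow> ('d::finite site \<Rightarrow> 'd config \<Rightarrow> real) \<Rightarrow> bool" where
  "local_potentials r S \<longleftrightarrow>
     0 < r \<and>
     \<comment> \<open>(A)\<close>
     (\<forall>j. depends_only_on (S j) (ball1 j r) \<and> C2_local (S j)) \<and>
     \<comment> \<open>(B)\<close>
     (\<forall>j k l x. S j (shift k l x) = S (j + k) x) \<and>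
     \<comment> \<open>(C)\<close>
     (\<forall>j. (\<exists>c. \<forall>x. c \<le> S j x) \<and>
          (\<forall>k. lnorm (k - j) = 1 \<longrightarrow>
             (\<forall>C. \<exists>R. \<forall>x. R < \<bar>x k - x j\<bar> \<longrightarrow> C < S j x))) \<and>
     \<comment> \<open>(D)\<close>
     (\<forall>i k j x. i \<noteq> k \<longrightarrow> partial2 i k (S j) x \<le> 0) \<and>
     (\<forall>i k x. lnorm (i - k) = 1 \<longrightarrow> partial2 i k (S i) x < 0) \<and>
     \<comment> \<open>(E)\<close>
     (\<exists>C. \<forall>i k j x. \<bar>partial2 i k (S j) x\<bar> \<le> C)"

definition strictly_less :: "'d config \<Rightarrow> 'd config \<Rightarrow> bool" where
  "strictly_less x y \<longleftrightarrow> (\<forall>i. x i < y i)"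

definition strictly_ordered :: "'d config set \<Rightarrow> bool" where
  "strictly_ordered F \<longleftrightarrow>
     (\<forall>x\<in>F. \<forall>y\<in>F. strictly_less x y \<or> x = y \<or> strictly_less y x)"

definition shift_invariant :: "'d::finite config set \<Rightarrow> bool" where
  "shift_invariant F \<longleftrightarrow> (\<forall>k l. shift k l ` F \<subseteq> F)"

definition has_rotation_vector :: "'d::finite config \<Rightarrow> real ^ 'd \<Rightarrow> bool" where
  "has_rotation_vector x \<omega> \<longleftrightarrow>
     (\<forall>i::'d site. (\<lambda>n::nat. x (\<chi> k. int n * i $ k) / real n)
        \<longlonglongrightarrow> (\<Sum>k\<in>UNIV. \<omega> $ k * real_of_int (i $ k)))"

definition interior_r :: "'d::finite site set \<Rightarrow> real \<Rightarrow> 'd site set" where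
  "interior_r B r = {i\<in>B. ball1 i r \<subseteq> B}"

definition W :: "('d site \<Rightarrow> 'd config \<Rightarrow> real) \<Rightarrow> 'd site set \<Rightarrow> 'd config \<Rightarrow> real" where
  "W S B x = (\<Sum>j\<in>B. S j x)"

definition global_minimizer ::
  "real \<Rightarrow> ('d::finite site \<Rightarrow> 'd config \<Rightarrow> real) \<Rightarrow> 'd config \<Rightarrow> bool" where
  "global_minimizer r S x \<longleftrightarrow>
     (\<forall>B y. finite B \<longrightarrow> (\<forall>i. i \<notin> interior_r B r \<longrightarrow> y i = 0) \<longrightarrow>
        W S B x \<le> W S B (\<lambda>i. x i + y i))"

definition perturbed :: "('d site \<Rightarrow> 'd config \<Rightarrow> real) \<Rightarrow> (real \<Rightarrow> real)
    \<Rightarrow> 'd site \<Rightarrow> 'd config \<Rightarrow> real" where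
  "perturbed S V j x = S j x + V (x j)"

end

theory Submission
  imports Defs
begin

text \<open>
  Let F be a connected, strictly ordered, shift-invariant family of
  global minimizers of the perturbed potentials S j x + V (x j), with rotation vector
  \<omega> \<in> K.  Since F is connected and invariant under the shifts x \<mapsto> x + l, the
  coordinate x 0 takes every real value on F; pick x \<in> F with x 0 = \<xi>, where
  V \<xi> - V \<nu> is close to osc V.  Moving the single coordinate x 0 to a translate
  \<nu>' of \<nu> with |\<nu>' - x 0| \<le> 1 lowers the V-part of the local energy on
  ball1 0 r by V \<xi> - V \<nu>, while the S-part changes by at most a constant L: the
  elements of F are Birkhoff, so near the origin they stay within a bounded distance
  (controlled by the size of K) of x 0, and the bounded second derivatives (E) together
  with the lattice-translation invariance (B) bound the change of each S j uniformly.
  If osc V > L, this contradicts minimality.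
\<close>

subsection \<open>Single-site changes of local functions with bounded second derivatives\<close>

lemma partial_eq: "has_partial f i x D \<Longrightarrow> partial i f x = D"
  unfolding partial_def has_partial_def
  by (rule the_equality) (auto intro: DERIV_unique)

lemma has_partial_upd:
  "has_partial g a (u(a := t)) D \<longleftrightarrow> ((\<lambda>s. g (u(a := s))) has_real_derivative D) (at t)"
  unfolding has_partial_def by simp

lemma has_partial_line_derivative:
  assumes "\<And>x. \<exists>D. has_partial g a x D"
  shows "((\<lambda>s. g (u(a := s))) has_real_derivative partial a g (u(a := t))) (at t)"
proof -
  obtain D where D: "has_partial g a (u(a := t)) D" using assms by blast
  then show ?thesis by (simp add: partial_eq has_partial_upd)
qed

lemma mean_value_bound:
  fixes h :: "real \<Rightarrow> real"
  assumes der: "\<And>t. (h has_real_derivative h' t) (at t)"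
    and bd: "\<And>t. min a b \<le> t \<Longrightarrow> t \<le> max a b \<Longrightarrow> \<bar>h' t\<bar> \<le> L"
  shows "\<bar>h b - h a\<bar> \<le> L * \<bar>b - a\<bar>"
proof -
  have *: "\<bar>h q - h p\<bar> \<le> L * \<bar>q - p\<bar>" if "p < q" "\<And>t. p \<le> t \<Longrightarrow> t \<le> q \<Longrightarrow> \<bar>h' t\<bar> \<le> L"
    for p q
  proof -
    obtain z where z: "p < z" "z < q" "h q - h p = (q - p) * h' z"
      using MVT2[of p q h h'] der \<open>p < q\<close> by blast
    have "\<bar>h' z\<bar> \<le> L" using that z by auto
    then show ?thesis using z by (simp add: abs_mult mult.commute mult_right_mono)
  qed
  show ?thesis
    using *[of a b] *[of b a] bd
    by (cases a b rule: linorder_cases) (auto simp: abs_minus_commute)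
qed

lemma finite_coordinate_lipschitz:
  fixes g :: "'d config \<Rightarrow> real"
  assumes ex: "\<And>i x. \<exists>D. has_partial g i x D"
    and bd: "\<And>i x. \<bar>partial i g x\<bar> \<le> C"
    and fin: "finite A"
  shows "(\<forall>k. k \<notin> A \<longrightarrow> u k = v k) \<Longrightarrow> (\<forall>k\<in>A. \<bar>u k - v k\<bar> \<le> R) \<Longrightarrow>
     \<bar>g u - g v\<bar> \<le> C * R * card A"
  using fin
proof (induction A arbitrary: u rule: finite_induct)
  case empty
  then have "u = v" by auto
  then show ?case by simp
next
  case (insert a A)
  define u1 where "u1 = u(a := v a)"
  have "\<bar>g u1 - g v\<bar> \<le> C * R * card A"
    using insert by (intro insert.IH) (auto simp: u1_def)
  moreover have "\<bar>g u - g u1\<bar> \<le> C * R"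
  proof -
    have "\<bar>g (u(a := u a)) - g (u(a := v a))\<bar> \<le> C * \<bar>u a - v a\<bar>"
      by (rule mean_value_bound[OF has_partial_line_derivative[OF ex]]) (rule bd)
    moreover have "C \<ge> 0" using bd[of a u] by linarith
    moreover have "\<bar>u a - v a\<bar> \<le> R" using insert.prems(2) by simp
    ultimately show ?thesis
      by (simp add: u1_def) (meson mult_left_mono order_trans)
  qed
  ultimately show ?case using insert.hyps by (simp add: algebra_simps)
qed

lemma partial_local:
  assumes "depends_only_on f G" "\<forall>k\<in>insert i G. x k = y k"
  shows "partial i f x = partial i f y"
proof -
  have "(\<lambda>t. f (x(i := t))) = (\<lambda>t. f (y(i := t)))"
    using assms unfolding depends_only_on_def by (intro ext) (metis fun_upd_apply insertCI)
  moreover have "x i = y i" using assms by auto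
  ultimately show ?thesis unfolding partial_def has_partial_def by simp
qed

lemma single_site_change_bounded:
  fixes f :: "'d::finite config \<Rightarrow> real"
  assumes C2: "C2_local f" and dep: "depends_only_on f G" and finG: "finite G"
    and E: "\<forall>a x. \<bar>partial2 a i f x\<bar> \<le> C" and P: "P \<ge> 0"
  shows "\<exists>L. \<forall>z t. (\<forall>k\<in>insert i G. \<bar>z k\<bar> \<le> P) \<longrightarrow> \<bar>t\<bar> \<le> P \<longrightarrow>
            \<bar>f (z(i := t)) - f z\<bar> \<le> L"
proof -
  define g where "g = partial i f"
  define A where "A = insert i G"
  have gex: "\<And>a x. \<exists>D. has_partial g a x D" using C2 unfolding C2_local_def g_def by blast
  have gbd: "\<And>a x. \<bar>partial a g x\<bar> \<le> C" using E unfolding g_def partial2_def by blast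
  have fex: "\<And>x. \<exists>D. has_partial f i x D" using C2 unfolding C2_local_def by blast
  have C0: "C \<ge> 0" using gbd[of i "\<lambda>_. 0"] by linarith
  define L0 where "L0 = \<bar>g (\<lambda>_. 0)\<bar> + C * P * card A"
  have L0: "\<bar>g w\<bar> \<le> L0" if w: "\<forall>k\<in>A. \<bar>w k\<bar> \<le> P" for w
  proof -
    define u where "u = (\<lambda>k. if k \<in> A then w k else 0)"
    have "g w = g u" unfolding g_def
      by (rule partial_local[OF dep]) (auto simp: u_def A_def)
    moreover have "\<bar>g u - g (\<lambda>_. 0)\<bar> \<le> C * P * card A"
      by (rule finite_coordinate_lipschitz[OF gex gbd])
        (use w finG in \<open>auto simp: u_def A_def\<close>)
    ultimately show ?thesis unfolding L0_def by linarith
  qed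
  have L0nn: "L0 \<ge> 0" unfolding L0_def using C0 P by simp
  show ?thesis
  proof (intro exI[of _ "L0 * (2 * P)"] allI impI)
    fix z :: "'d config" and t :: real
    assume z: "\<forall>k\<in>insert i G. \<bar>z k\<bar> \<le> P" and t: "\<bar>t\<bar> \<le> P"
    have "\<bar>f (z(i := t)) - f (z(i := z i))\<bar> \<le> L0 * \<bar>t - z i\<bar>"
    proof (rule mean_value_bound[OF has_partial_line_derivative[OF fex]])
      fix s assume "min (z i) t \<le> s" "s \<le> max (z i) t"
      then have "\<bar>s\<bar> \<le> P" using t z by (auto simp: min_def max_def split: if_splits)
      then show "\<bar>partial i f (z(i := s))\<bar> \<le> L0"
        using z L0 unfolding g_def A_def by auto
    qed
    moreover have "\<bar>t - z i\<bar> \<le> 2 * P" using t z by auto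
    ultimately show "\<bar>f (z(i := t)) - f z\<bar> \<le> L0 * (2 * P)"
      by (metis fun_upd_triv L0nn mult_left_mono order_trans)
  qed
qed

lemma abs_comp_le_lnorm: "real_of_int \<bar>v $ i\<bar> \<le> real_of_int (lnorm v)"
  unfolding lnorm_def by (simp only: of_int_le_iff, rule member_le_sum) auto

lemma lnorm_triangle: "lnorm (a + b) \<le> lnorm a + lnorm b"
  unfolding lnorm_def by (simp add: sum.distrib[symmetric] sum_mono abs_triangle_ineq)

lemma finite_box: "finite {v :: int ^ 'd::finite. \<forall>i. \<bar>v $ i\<bar> \<le> N}"
proof -
  have "{v :: int ^ 'd. \<forall>i. \<bar>v $ i\<bar> \<le> N} \<subseteq> vec_lambda ` (PiE UNIV (\<lambda>_. {-N..N}))"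
  proof
    fix v :: "int ^ 'd" assume "v \<in> {v. \<forall>i. \<bar>v $ i\<bar> \<le> N}"
    then have "(\<lambda>i. v $ i) \<in> PiE UNIV (\<lambda>_. {-N..N})" by (auto simp: abs_le_iff) (metis minus_le_iff)
    then show "v \<in> vec_lambda ` (PiE UNIV (\<lambda>_. {-N..N}))"
      by (metis image_eqI vec_lambda_eta)
  qed
  then show ?thesis by (rule finite_subset) (intro finite_imageI finite_PiE, auto)
qed

lemma finite_ball1: "finite (ball1 (j::'d::finite site) r)"
proof -
  have "ball1 j r \<subseteq> (\<lambda>v. v + j) ` {v. \<forall>i. \<bar>v $ i\<bar> \<le> \<lceil>r\<rceil>}"
  proof
    fix k assume "k \<in> ball1 j r"
    then have "real_of_int (lnorm (k - j)) \<le> r" by (simp add: ball1_def)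
    then have "\<forall>i. \<bar>(k - j) $ i\<bar> \<le> \<lceil>r\<rceil>"
      using abs_comp_le_lnorm[of "k - j"]
      by (meson ceiling_le_iff le_of_int_ceiling order_trans of_int_le_iff)
    then show "k \<in> (\<lambda>v. v + j) ` {v. \<forall>i. \<bar>v $ i\<bar> \<le> \<lceil>r\<rceil>}"
      by (intro image_eqI[of _ _ "k - j"]) auto
  qed
  then show ?thesis using finite_box by (rule finite_subset[OF _ finite_imageI])
qed

lemma lnorm_nonneg: "lnorm v \<ge> 0"
  unfolding lnorm_def by (simp add: sum_nonneg)

lemma ball1_triangle:
  assumes "j \<in> ball1 i a"
  shows "ball1 j b \<subseteq> ball1 i (a + b)"
proof
  fix k assume k: "k \<in> ball1 j b"
  have "lnorm (k - i) \<le> lnorm (k - j) + lnorm (j - i)"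
    using lnorm_triangle[of "k - j" "j - i"] by simp
  then have "real_of_int (lnorm (k - i)) \<le> real_of_int (lnorm (k - j)) + real_of_int (lnorm (j - i))"
    by linarith
  then show "k \<in> ball1 i (a + b)" using assms k unfolding ball1_def by simp
qed

lemma dot_le_norm_lnorm:
  fixes \<omega> :: "real ^ 'd::finite" and k :: "int ^ 'd"
  shows "\<bar>\<Sum>i\<in>UNIV. \<omega> $ i * real_of_int (k $ i)\<bar> \<le> norm \<omega> * real_of_int (lnorm k)"
proof -
  have "\<bar>\<Sum>i\<in>UNIV. \<omega> $ i * real_of_int (k $ i)\<bar> \<le> (\<Sum>i\<in>UNIV. \<bar>\<omega> $ i * real_of_int (k $ i)\<bar>)"
    by (rule sum_abs)
  also have "\<dots> \<le> (\<Sum>i\<in>UNIV. norm \<omega> * real_of_int \<bar>k $ i\<bar>)"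
    by (intro sum_mono) (simp add: abs_mult mult_right_mono component_le_norm_cart)
  also have "\<dots> = norm \<omega> * real_of_int (lnorm k)"
    by (simp add: lnorm_def sum_distrib_left)
  finally show ?thesis .
qed

subsection \<open>Strictly ordered shift-invariant families\<close>

text \<open>In a strictly ordered shift-invariant family every increment x (i + q) - x i is
  within 1 of the increment x q - x 0: otherwise an integer translate of the q-shift of x
  would be neither above nor below x.\<close>
lemma ordered_family_increments:
  assumes so: "strictly_ordered F" and si: "shift_invariant F" and x: "x \<in> F"
  shows "\<bar>(x (i + q) - x i) - (x q - x 0)\<bar> < 1"
proof -
  define a where "a = x q - x 0"
  define l1 where "l1 = \<lfloor>1 - a\<rfloor>"
  define l2 where "l2 = \<lceil>-1 - a\<rceil>"
  have shifts: "shift q l1 x \<in> F" "shift q l2 x \<in> F"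
    using si x unfolding shift_invariant_def by blast+
  have l1b: "-a < of_int l1" "of_int l1 \<le> 1 - a" unfolding l1_def by linarith+
  have l2b: "-1 - a \<le> of_int l2" "of_int l2 < - a" unfolding l2_def by linarith+
  have "strictly_less x (shift q l1 x)"
  proof -
    have "x 0 < shift q l1 x 0" using l1b unfolding shift_def a_def by simp
    then show ?thesis using so x shifts unfolding strictly_ordered_def strictly_less_def
      by (metis less_asym less_irrefl)
  qed
  then have up: "x i < x (i + q) + of_int l1" unfolding strictly_less_def shift_def by blast
  have "strictly_less (shift q l2 x) x"
  proof -
    have "shift q l2 x 0 < x 0" using l2b unfolding shift_def a_def by simp
    then show ?thesis using so x shifts unfolding strictly_ordered_def strictly_less_def
      by (metis less_asym less_irrefl)
  qed
  then have down: "x (i + q) + of_int l2 < x i" unfolding strictly_less_def shift_def by blast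
  show ?thesis using up down l1b l2b unfolding a_def by linarith
qed

lemma increment_near_rotation:
  assumes so: "strictly_ordered F" and si: "shift_invariant F" and x: "x \<in> F"
    and rot: "has_rotation_vector x \<omega>"
  shows "\<bar>x q - x 0 - (\<Sum>k\<in>UNIV. \<omega> $ k * real_of_int (q $ k))\<bar> \<le> 1"
proof -
  define a where "a = x q - x 0"
  define p where "p = (\<lambda>n::nat. (\<chi> k. int n * q $ k) :: int ^ 'a)"
  define w where "w = (\<Sum>k\<in>UNIV. \<omega> $ k * real_of_int (q $ k))"
  have pS: "p (Suc n) = p n + q" for n unfolding p_def by (simp add: vec_eq_iff algebra_simps)
  have p0: "p 0 = 0" unfolding p_def by (simp add: vec_eq_iff)
  have bnd: "\<bar>x (p n) - x 0 - real n * a\<bar> \<le> real n" for n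
  proof (induction n)
    case (Suc n)
    have "\<bar>(x (p n + q) - x (p n)) - a\<bar> < 1"
      using ordered_family_increments[OF so si x] unfolding a_def by blast
    with Suc show ?case by (simp add: pS algebra_simps)
  qed (simp add: p0)
  have X: "(\<lambda>n. x (p n) / real n) \<longlonglongrightarrow> w"
    using rot unfolding has_rotation_vector_def p_def w_def by blast
  have Y: "(\<lambda>n. x 0 / real n + (a + c)) \<longlonglongrightarrow> 0 + (a + c)" for c
    by (intro tendsto_intros)
  have ev: "\<forall>n\<ge>1. x (p n) / real n \<le> x 0 / real n + (a + 1) \<and>
                   x 0 / real n + (a + -1) \<le> x (p n) / real n"
  proof (intro allI impI)
    fix n :: nat assume "1 \<le> n"
    then have "x (p n) / real n - (x 0 / real n + a) = (x (p n) - x 0 - real n * a) / real n"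
      by (simp add: field_simps)
    moreover have "\<bar>(x (p n) - x 0 - real n * a) / real n\<bar> \<le> 1"
      using bnd[of n] \<open>1 \<le> n\<close> by (simp add: divide_le_eq_1)
    ultimately show "x (p n) / real n \<le> x 0 / real n + (a + 1) \<and>
                   x 0 / real n + (a + -1) \<le> x (p n) / real n"
      by linarith
  qed
  have "w \<le> 0 + (a + 1)"
    by (rule LIMSEQ_le[OF X Y]) (use ev in blast)
  moreover have "0 + (a + -1) \<le> w"
    by (rule LIMSEQ_le[OF Y X]) (use ev in blast)
  ultimately show ?thesis unfolding a_def w_def by linarith
qed

lemma ordered_family_near_origin:
  assumes "strictly_ordered F" "shift_invariant F" "x \<in> F" "has_rotation_vector x \<omega>"
    and "norm \<omega> \<le> B" "k \<in> ball1 0 R"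
  shows "\<bar>x k - x 0\<bar> \<le> B * R + 1"
proof -
  have "0 \<le> B" using assms(5) by (meson norm_ge_zero order_trans)
  then have "norm \<omega> * real_of_int (lnorm k) \<le> B * R"
    using assms(5,6) lnorm_nonneg[of k] by (intro mult_mono) (auto simp: ball1_def)
  then show ?thesis
    using increment_near_rotation[OF assms(1-4), of k] dot_le_norm_lnorm[of \<omega> k] by linarith
qed

lemma shift_invariant_connected_hits_all_values:
  fixes F :: "'d::finite config set"
  assumes ne: "F \<noteq> {}" and conn: "connected F" and si: "shift_invariant F"
  shows "\<exists>x\<in>F. x i = (\<xi>::real)"
proof -
  obtain x where x: "x \<in> F" using ne by blast
  have c: "connected ((\<lambda>y::'d config. y i) ` F)"
    by (rule connected_continuous_image[OF continuous_on_subset[OF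
          continuous_on_product_coordinates] conn]) simp
  have mem: "x i + of_int l \<in> (\<lambda>y. y i) ` F" for l
  proof -
    have "shift 0 l x \<in> F" using si x unfolding shift_invariant_def by blast
    moreover have "shift 0 l x i = x i + of_int l" by (simp add: shift_def)
    ultimately show ?thesis by (metis image_eqI)
  qed
  have "x i + of_int \<lfloor>\<xi> - x i\<rfloor> \<le> \<xi>" "\<xi> \<le> x i + of_int \<lceil>\<xi> - x i\<rceil>" by linarith+
  then have "\<xi> \<in> (\<lambda>y. y i) ` F" using c mem unfolding connected_iff_interval by blast
  then show ?thesis by auto
qed

subsection \<open>Uniform bound on the S-part of a single-site move\<close>

text \<open>By translation invariance (B) we may
  normalise x 0 to [0,1), after which the single-site bound applies to each S j.\<close>
lemma local_energy_change_bounded: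
  fixes S :: "'d::finite site \<Rightarrow> 'd config \<Rightarrow> real"
  assumes pot: "local_potentials r S" and P: "P \<ge> 0"
  shows "\<exists>L. \<forall>x t. (\<forall>k\<in>ball1 0 (2 * r). \<bar>x k - x 0\<bar> \<le> P) \<longrightarrow> \<bar>t - x 0\<bar> \<le> 1 \<longrightarrow>
           (\<Sum>j\<in>ball1 0 r. S j (x(0 := t)) - S j x) \<le> L"
proof -
  have SA: "\<And>j. depends_only_on (S j) (ball1 j r) \<and> C2_local (S j)"
    and SB: "\<And>j k l x. S j (shift k l x) = S (j + k) x"
    using pot unfolding local_potentials_def by auto
  have "\<exists>C. \<forall>a b j x. \<bar>partial2 a b (S j) x\<bar> \<le> C"
    using pot unfolding local_potentials_def by (elim conjE) assumption
  then obtain C where SE: "\<forall>a b j x. \<bar>partial2 a b (S j) x\<bar> \<le> C" by blast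
  have "\<forall>j. \<exists>L. \<forall>z t. (\<forall>k\<in>insert 0 (ball1 j r). \<bar>z k\<bar> \<le> P + 2) \<longrightarrow>
      \<bar>t\<bar> \<le> P + 2 \<longrightarrow> \<bar>S j (z(0 := t)) - S j z\<bar> \<le> L"
  proof
    fix j
    show "\<exists>L. \<forall>z t. (\<forall>k\<in>insert 0 (ball1 j r). \<bar>z k\<bar> \<le> P + 2) \<longrightarrow>
        \<bar>t\<bar> \<le> P + 2 \<longrightarrow> \<bar>S j (z(0 := t)) - S j z\<bar> \<le> L"
    proof (rule single_site_change_bounded[where C = C])
      show "C2_local (S j)" "depends_only_on (S j) (ball1 j r)" using SA by blast+
      show "\<forall>a x. \<bar>partial2 a 0 (S j) x\<bar> \<le> C" using SE by blast
    qed (use P finite_ball1 in auto)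
  qed
  then have "\<exists>Lf. \<forall>j. \<forall>z t. (\<forall>k\<in>insert 0 (ball1 j r). \<bar>z k\<bar> \<le> P + 2) \<longrightarrow>
      \<bar>t\<bar> \<le> P + 2 \<longrightarrow> \<bar>S j (z(0 := t)) - S j z\<bar> \<le> Lf j"
    by (rule choice)
  then obtain Lf where Lf: "\<forall>j z t. (\<forall>k\<in>insert 0 (ball1 j r). \<bar>z k\<bar> \<le> P + 2) \<longrightarrow>
      \<bar>t\<bar> \<le> P + 2 \<longrightarrow> \<bar>S j (z(0 := t)) - S j z\<bar> \<le> Lf j"
    by blast
  show ?thesis
  proof (intro exI[of _ "\<Sum>j\<in>ball1 0 r. Lf j"] allI impI sum_mono)
    fix x :: "'d config" and t and j :: "'d site"
    assume x: "\<forall>k\<in>ball1 0 (2 * r). \<bar>x k - x 0\<bar> \<le> P" and t: "\<bar>t - x 0\<bar> \<le> 1"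
      and j: "j \<in> ball1 0 r"
    define m where "m = \<lfloor>x 0\<rfloor>"
    define z where "z = (\<lambda>i. x i - of_int m)"
    have xz: "x = shift 0 m z" and xtz: "x(0 := t) = shift 0 m (z(0 := t - of_int m))"
      unfolding z_def shift_def by (auto simp: fun_eq_iff)
    have frac: "0 \<le> x 0 - of_int m" "x 0 - of_int m < 1" unfolding m_def by linarith+
    have "ball1 j r \<subseteq> ball1 0 (2 * r)" using ball1_triangle[OF j, of r] by (simp only: mult_2)
    then have "\<forall>k\<in>ball1 j r. \<bar>x k - x 0\<bar> \<le> P" using x by blast
    then have "\<forall>k\<in>insert 0 (ball1 j r). \<bar>z k\<bar> \<le> P + 2"
      using frac P unfolding z_def by (auto simp: abs_le_iff)
    moreover have "\<bar>t - of_int m\<bar> \<le> P + 2" using t P unfolding m_def by linarith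
    ultimately have "\<bar>S j (z(0 := t - of_int m)) - S j z\<bar> \<le> Lf j" using Lf by blast
    then show "S j (x(0 := t)) - S j x \<le> Lf j" using SB[of j 0 m] xz xtz by simp
  qed
qed

lemma minimizer_single_site_move:
  assumes min: "global_minimizer r (perturbed S V) x" and r: "0 \<le> r"
  shows "V (x i) - V t \<le> (\<Sum>j\<in>ball1 i r. S j (x(i := t)) - S j x)"
proof -
  define B where "B = ball1 i r"
  define y where "y = (\<lambda>k. if k = i then t - x i else 0)"
  have iB: "i \<in> B" "i \<in> interior_r B r"
    using r unfolding B_def interior_r_def ball1_def lnorm_def by simp_all
  have "\<forall>k. k \<notin> interior_r B r \<longrightarrow> y k = 0" using iB by (simp add: y_def)
  then have "W (perturbed S V) B x \<le> W (perturbed S V) B (\<lambda>k. x k + y k)"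
    using min finite_ball1[of i r] unfolding global_minimizer_def B_def by blast
  moreover have "(\<lambda>k. x k + y k) = x(i := t)" by (auto simp: y_def)
  moreover have "(\<Sum>j\<in>B. V ((x(i := t)) j) - V (x j)) = V t - V (x i)"
  proof -
    have "(\<Sum>j\<in>B. V ((x(i := t)) j) - V (x j)) = (\<Sum>j\<in>B. if j = i then V t - V (x i) else 0)"
      by (rule sum.cong) auto
    also have "\<dots> = V t - V (x i)"
      using sum.delta[OF finite_ball1[of i r], of i "\<lambda>_. V t - V (x i)"] iB unfolding B_def by simp
    finally show ?thesis .
  qed
  ultimately show ?thesis
    by (simp add: W_def perturbed_def sum.distrib sum_subtractf B_def)
qed

lemma periodic_int:
  fixes V :: "real \<Rightarrow> real"
  assumes per: "\<forall>t. V (t + 1) = V t"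
  shows "V (t + of_int n) = V t"
proof -
  have nat: "V (s + real m) = V s" for s m
  proof (induction m arbitrary: s)
    case (Suc m)
    have "V (s + real (Suc m)) = V ((s + real m) + 1)" by (simp add: algebra_simps)
    also have "\<dots> = V s" using per Suc by simp
    finally show ?case .
  qed simp
  show ?thesis
    using nat[of t "nat n"] nat[of "t + of_int n" "nat (- n)"] by (cases "n \<ge> 0") auto
qed

lemma periodic_value_nearby:
  fixes V :: "real \<Rightarrow> real"
  assumes per: "\<forall>t. V (t + 1) = V t"
  obtains \<nu>' where "V \<nu>' = V \<nu>" "\<bar>\<nu>' - \<xi>\<bar> \<le> 1"
proof
  show "V (\<nu> + of_int \<lceil>\<xi> - \<nu>\<rceil>) = V \<nu>" by (rule periodic_int[OF per])
  show "\<bar>\<nu> + of_int \<lceil>\<xi> - \<nu>\<rceil> - \<xi>\<bar> \<le> 1" by linarith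
qed

lemma osc_witness:
  assumes "M < osc V"
  obtains \<xi> \<nu> where "M < V \<xi> - V \<nu>"
proof -
  have "\<not> (\<forall>\<xi> \<nu>. V \<xi> - V \<nu> \<le> M)"
  proof
    assume "\<forall>\<xi> \<nu>. V \<xi> - V \<nu> \<le> M"
    then have "osc V \<le> M" unfolding osc_def by (intro cSup_least) auto
    then show False using assms by linarith
  qed
  then show ?thesis using that by (auto simp: not_le)
qed

theorem mainTheorem10:
  fixes S :: "'d::finite site \<Rightarrow> 'd config \<Rightarrow> real"
    and r :: real
    and K :: "(real ^ 'd) set"
  assumes "local_potentials r S"
    and "compact K"
  shows "\<exists>M>0. \<forall>V :: real \<Rightarrow> real.
           (\<forall>t. V (t + 1) = V t) \<and> C2_real V \<and> osc V > M \<longrightarrow>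
           \<not> (\<exists>F :: 'd config set. F \<noteq> {} \<and> connected F \<and> strictly_ordered F \<and>
                 shift_invariant F \<and>
                 (\<forall>x\<in>F. global_minimizer r (perturbed S V) x) \<and>
                 (\<exists>\<omega>\<in>K. \<forall>x\<in>F. has_rotation_vector x \<omega>))"
proof -
  have r: "r > 0" using assms(1) unfolding local_potentials_def by blast
  obtain Bk where Bk: "\<forall>\<omega>\<in>K. norm \<omega> \<le> Bk" "Bk \<ge> 0"
    using compact_imp_bounded[OF assms(2)] unfolding bounded_iff by (meson norm_ge_zero order_trans)
  define P where "P = Bk * (2 * r) + 1"
  have "P \<ge> 0" using Bk r unfolding P_def by simp
  then obtain L where L: "\<forall>x t. (\<forall>k\<in>ball1 0 (2 * r). \<bar>x k - x 0\<bar> \<le> P) \<longrightarrow>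
      \<bar>t - x 0\<bar> \<le> 1 \<longrightarrow> (\<Sum>j\<in>ball1 0 r. S j (x(0 := t)) - S j x) \<le> L"
    using local_energy_change_bounded[OF assms(1)] by blast
  show ?thesis
  proof (intro exI[of _ "max L 0 + 1"] conjI allI impI notI)
    fix V :: "real \<Rightarrow> real"
    assume V: "(\<forall>t. V (t + 1) = V t) \<and> C2_real V \<and> max L 0 + 1 < osc V"
    assume "\<exists>F :: 'd config set. F \<noteq> {} \<and> connected F \<and> strictly_ordered F \<and> shift_invariant F \<and>
       (\<forall>x\<in>F. global_minimizer r (perturbed S V) x) \<and> (\<exists>\<omega>\<in>K. \<forall>x\<in>F. has_rotation_vector x \<omega>)"
    then obtain F \<omega> where F: "F \<noteq> {}" "connected F" "strictly_ordered F" "shift_invariant F"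
      "\<forall>x\<in>F. global_minimizer r (perturbed S V) x" "\<omega> \<in> K" "\<forall>x\<in>F. has_rotation_vector x \<omega>"
      by blast
    obtain \<xi> \<nu> where gap: "max L 0 + 1 < V \<xi> - V \<nu>" using osc_witness V by metis
    obtain x where x: "x \<in> F" "x 0 = \<xi>"
      using shift_invariant_connected_hits_all_values[OF F(1,2,4)] by blast
    obtain \<nu>' where V\<nu>': "V \<nu>' = V \<nu>" and step: "\<bar>\<nu>' - x 0\<bar> \<le> 1"
      using periodic_value_nearby V by blast
    have near: "\<forall>k\<in>ball1 0 (2 * r). \<bar>x k - x 0\<bar> \<le> P"
      using ordered_family_near_origin[OF F(3,4) x(1)] F(6,7) x(1) Bk(1) unfolding P_def by blast
    have "global_minimizer r (perturbed S V) x" using F(5) x(1) by blast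
    then have "V (x 0) - V \<nu>' \<le> (\<Sum>j\<in>ball1 0 r. S j (x(0 := \<nu>')) - S j x)"
      by (rule minimizer_single_site_move[OF _ less_imp_le[OF r]])
    moreover have "(\<Sum>j\<in>ball1 0 r. S j (x(0 := \<nu>')) - S j x) \<le> L" using L near step by blast
    ultimately have "V \<xi> - V \<nu> \<le> L" unfolding x(2)[symmetric] V\<nu>'[symmetric] by linarith
    then show False using gap by linarith
  qed simp
qed

end
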